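(* Let $\Gamma=(V,E)$ be a weakly connected simple digraph and $G$ a finite group. Then there exists a map $\rho:E\to G$ such that the voltage graph $(\Gamma,\rho)$ is structurally balanced and nondegenerate if and only if $|V|\ge|G|$.
   Context: $e_{ij}$ is the edge $v_i\to v_j$. A semi-walk from $v_{i_1}$ to $v_{i_n}$ is $w=v_{i_1}a_1\dots a_{n-1}v_{i_n}$ with each $a_j\in\{e_{i_ji_{j+1}},e_{i_{j+1}i_j}\}$; it is closed if $v_{i_1}=v_{i_n}$. $\Gamma$ is weakly connected if any two vertices are joined by a semi-walk. Net voltage: $f(w)=\bar\rho(a_1)\cdots\bar\rho(a_{n-1})$ with $\bar\rho(a_j)=\rho(a_j)$ if $a_j=e_{i_ji_{j+1}}$ and $\rho(a_j)^{-1}$ otherwise; $f$ of a single-vertex semi-walk is the identity $\mathbf 1$. $(\Gamma,\rho)$ is structurally balanced if $f(w)=\mathbf 1$ for every closed semi-walk $w$. With $\mathrm{Net}(v_i,V)=\{f(w): w$ a semi-walk starting at $v_i\}$, $(\Gamma,\rho)$ is nondegenerate if $\mathrm{Net}(v_i,V)=G$ for some vertex $v_i$. *)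

theory Defs
  imports "HOL-Algebra.Group"
begin

text \<open>A semi-walk step is an arc together with a direction flag: (e, True) traverses e forwards,
(e, False) traverses e backwards.\<close>

definition step_src :: "('v \<times> 'v) \<times> bool \<Rightarrow> 'v" where
  "step_src a = (if snd a then fst (fst a) else snd (fst a))"

definition step_tgt :: "('v \<times> 'v) \<times> bool \<Rightarrow> 'v" where
  "step_tgt a = (if snd a then snd (fst a) else fst (fst a))"

inductive semiwalk :: "('v \<times> 'v) set \<Rightarrow> 'v \<Rightarrow> (('v \<times> 'v) \<times> bool) list \<Rightarrow> 'v \<Rightarrow> bool"
  for E where
  sw_nil: "semiwalk E u [] u"
| sw_cons: "\<lbrakk> fst a \<in> E; step_src a = u; semiwalk E (step_tgt a) ws w \<rbrakk>
            \<Longrightarrow> semiwalk E u (a # ws) w"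

definition simple_digraph :: "'v set \<Rightarrow> ('v \<times> 'v) set \<Rightarrow> bool" where
  "simple_digraph V E \<longleftrightarrow> finite V \<and> E \<subseteq> V \<times> V \<and> (\<forall>v. (v, v) \<notin> E)"

definition weakly_connected :: "'v set \<Rightarrow> ('v \<times> 'v) set \<Rightarrow> bool" where
  "weakly_connected V E \<longleftrightarrow> (\<forall>u\<in>V. \<forall>w\<in>V. \<exists>ws. semiwalk E u ws w)"

definition net_voltage :: "('g, 'b) monoid_scheme \<Rightarrow> ('v \<times> 'v \<Rightarrow> 'g)
    \<Rightarrow> (('v \<times> 'v) \<times> bool) list \<Rightarrow> 'g" where
  "net_voltage G \<rho> ws =
     foldr (\<lambda>a acc. (if snd a then \<rho> (fst a) else inv\<^bsub>G\<^esub> (\<rho> (fst a))) \<otimes>\<^bsub>G\<^esub> acc) ws \<one>\<^bsub>G\<^esub>"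

definition structurally_balanced ::
    "'v set \<Rightarrow> ('v \<times> 'v) set \<Rightarrow> ('g, 'b) monoid_scheme \<Rightarrow> ('v \<times> 'v \<Rightarrow> 'g) \<Rightarrow> bool" where
  "structurally_balanced V E G \<rho> \<longleftrightarrow>
     (\<forall>v\<in>V. \<forall>ws. semiwalk E v ws v \<longrightarrow> net_voltage G \<rho> ws = \<one>\<^bsub>G\<^esub>)"

definition Net :: "('v \<times> 'v) set \<Rightarrow> ('g, 'b) monoid_scheme \<Rightarrow> ('v \<times> 'v \<Rightarrow> 'g) \<Rightarrow> 'v \<Rightarrow> 'g set" where
  "Net E G \<rho> v = {net_voltage G \<rho> ws | ws. \<exists>w. semiwalk E v ws w}"

definition nondegenerate ::
    "'v set \<Rightarrow> ('v \<times> 'v) set \<Rightarrow> ('g, 'b) monoid_scheme \<Rightarrow> ('v \<times> 'v \<Rightarrow> 'g) \<Rightarrow> bool" where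
  "nondegenerate V E G \<rho> \<longleftrightarrow> (\<exists>v\<in>V. Net E G \<rho> v = carrier G)"

end

theory Submission
  imports Defs
begin

text \<open>In a structurally balanced voltage graph the net voltage of a semi-walk from a fixed
vertex v only depends on its endpoint (two such walks close up to a closed semi-walk through v),
so Net(v) has at most |V| elements. Conversely, for any potential \<phi> : V \<rightarrow> G the voltage
\<rho>(x,y) = \<phi>(x)\<inverse> \<phi>(y) is balanced, since net voltages telescope to \<phi>(u)\<inverse> \<phi>(w); if |V| \<ge> |G|
then \<phi> can be chosen onto G, and weak connectivity makes every group element a net voltage.\<close>

lemma semiwalk_append:
  "semiwalk E u ws w \<Longrightarrow> semiwalk E w ws' x \<Longrightarrow> semiwalk E u (ws @ ws') x"
  by (induction rule: semiwalk.induct) (auto intro: semiwalk.intros)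

definition reverse_walk :: "(('v \<times> 'v) \<times> bool) list \<Rightarrow> (('v \<times> 'v) \<times> bool) list" where
  "reverse_walk ws = rev (map (\<lambda>a. (fst a, \<not> snd a)) ws)"

lemma semiwalk_reverse_walk:
  "semiwalk E u ws w \<Longrightarrow> semiwalk E w (reverse_walk ws) u"
proof (induction rule: semiwalk.induct)
  case (sw_nil u)
  then show ?case by (simp add: reverse_walk_def semiwalk.intros)
next
  case (sw_cons a u ws w)
  have "semiwalk E (step_tgt a) [(fst a, \<not> snd a)] u"
    using sw_cons.hyps by (auto intro!: semiwalk.intros simp: step_src_def step_tgt_def)
  then show ?case
    using sw_cons.IH semiwalk_append by (fastforce simp: reverse_walk_def)
qed

lemma semiwalk_endpoint_in_vertices:
  "semiwalk E u ws w \<Longrightarrow> E \<subseteq> V \<times> V \<Longrightarrow> u \<in> V \<Longrightarrow> w \<in> V"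
  by (induction rule: semiwalk.induct) (auto simp: step_src_def step_tgt_def split: if_splits)

lemma semiwalk_arcs: "semiwalk E u ws w \<Longrightarrow> set ws \<subseteq> E \<times> UNIV"
  by (induction rule: semiwalk.induct) (auto simp: mem_Times_iff)

definition potential_voltage :: "('g, 'b) monoid_scheme \<Rightarrow> ('v \<Rightarrow> 'g) \<Rightarrow> 'v \<times> 'v \<Rightarrow> 'g" where
  "potential_voltage G \<phi> = (\<lambda>(x, y). inv\<^bsub>G\<^esub> (\<phi> x) \<otimes>\<^bsub>G\<^esub> \<phi> y)"

lemma ex_onto_map_of_card_le:
  assumes "finite A" "finite B" "B \<noteq> {}" "card B \<le> card A"
  shows "\<exists>f. f ` UNIV \<subseteq> B \<and> B \<subseteq> f ` A"
proof -
  obtain g where g: "g ` B \<subseteq> A" "inj_on g B"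
    using card_le_inj[OF assms(2,1,4)] by blast
  obtain b where b: "b \<in> B" using assms(3) by blast
  define f where "f a = (if a \<in> g ` B then inv_into B g a else b)" for a
  have "f ` UNIV \<subseteq> B"
    using b by (auto simp: f_def inv_into_into)
  moreover have "B \<subseteq> f ` A"
  proof
    fix x assume "x \<in> B"
    then have "f (g x) = x" and "g x \<in> A"
      using g by (auto simp: f_def)
    then show "x \<in> f ` A" by (metis image_eqI)
  qed
  ultimately show ?thesis by blast
qed

context group
begin

lemma net_voltage_closed:
  assumes "\<rho> \<in> E \<rightarrow> carrier G" "set ws \<subseteq> E \<times> UNIV"
  shows "net_voltage G \<rho> ws \<in> carrier G"
  using assms(2)
  by (induction ws) (auto simp: net_voltage_def intro!: m_closed dest: funcset_mem[OF assms(1)])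

lemma net_voltage_append:
  assumes \<rho>: "\<rho> \<in> E \<rightarrow> carrier G" and "set ws \<subseteq> E \<times> UNIV" "set ws' \<subseteq> E \<times> UNIV"
  shows "net_voltage G \<rho> (ws @ ws') = net_voltage G \<rho> ws \<otimes> net_voltage G \<rho> ws'"
  using assms(2)
proof (induction ws)
  case Nil
  then show ?case
    using net_voltage_closed[OF \<rho> assms(3)] by (simp add: net_voltage_def)
next
  case (Cons a ws)
  then have "net_voltage G \<rho> ws \<in> carrier G" "\<rho> (fst a) \<in> carrier G"
    using net_voltage_closed[OF \<rho>] \<rho> by (auto simp: mem_Times_iff)
  with Cons show ?case
    using net_voltage_closed[OF \<rho> assms(3)] by (simp add: net_voltage_def m_assoc)
qed

lemma net_voltage_reverse_walk:
  assumes \<rho>: "\<rho> \<in> E \<rightarrow> carrier G" and "set ws \<subseteq> E \<times> UNIV"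
  shows "net_voltage G \<rho> (reverse_walk ws) = inv (net_voltage G \<rho> ws)"
  using assms(2)
proof (induction ws)
  case Nil
  then show ?case by (simp add: net_voltage_def reverse_walk_def)
next
  case (Cons a ws)
  let ?a' = "(fst a, \<not> snd a)"
  have closed: "net_voltage G \<rho> ws \<in> carrier G" "\<rho> (fst a) \<in> carrier G"
    using Cons net_voltage_closed[OF \<rho>] \<rho> by (auto simp: mem_Times_iff)
  have arcs: "set (reverse_walk ws) \<subseteq> E \<times> UNIV" "set [?a'] \<subseteq> E \<times> UNIV"
    using Cons by (auto simp: reverse_walk_def mem_Times_iff)
  have "net_voltage G \<rho> (reverse_walk (a # ws)) = net_voltage G \<rho> (reverse_walk ws @ [?a'])"
    by (simp add: reverse_walk_def)
  also have "\<dots> = inv (net_voltage G \<rho> ws) \<otimes> net_voltage G \<rho> [?a']"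
    using net_voltage_append[OF \<rho> arcs] Cons by simp
  also have "\<dots> = inv (net_voltage G \<rho> (a # ws))"
    using closed by (simp add: net_voltage_def inv_mult_group)
  finally show ?case .
qed

lemma net_voltage_potential_voltage:
  assumes "semiwalk E u ws w" "\<And>x. \<phi> x \<in> carrier G"
  shows "net_voltage G (potential_voltage G \<phi>) ws = inv (\<phi> u) \<otimes> \<phi> w"
  using assms(1)
proof (induction rule: semiwalk.induct)
  case (sw_nil u)
  then show ?case using assms(2) by (simp add: net_voltage_def)
next
  case (sw_cons a u ws w)
  obtain x y b where a: "a = ((x, y), b)" by (metis prod.collapse)
  show ?case
    using sw_cons a assms(2)
    by (cases b)
       (simp_all add: net_voltage_def potential_voltage_def step_src_def step_tgt_def
         m_assoc[symmetric] inv_mult_group, simp_all add: m_assoc)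
qed

lemma potential_voltage_funcset:
  "(\<And>x. \<phi> x \<in> carrier G) \<Longrightarrow> potential_voltage G \<phi> \<in> E \<rightarrow> carrier G"
  by (auto simp: potential_voltage_def)

lemma structurally_balanced_potential_voltage:
  "(\<And>x. \<phi> x \<in> carrier G) \<Longrightarrow> structurally_balanced V E G (potential_voltage G \<phi>)"
  by (auto simp: structurally_balanced_def net_voltage_potential_voltage)

lemma Net_potential_voltage:
  assumes wc: "weakly_connected V E" and v: "v \<in> V"
    and \<phi>: "\<And>x. \<phi> x \<in> carrier G" and onto: "carrier G \<subseteq> \<phi> ` V"
  shows "Net E G (potential_voltage G \<phi>) v = carrier G"
proof
  show "Net E G (potential_voltage G \<phi>) v \<subseteq> carrier G"
    using \<phi> by (auto simp: Net_def net_voltage_potential_voltage)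
next
  show "carrier G \<subseteq> Net E G (potential_voltage G \<phi>) v"
  proof
    fix x assume x: "x \<in> carrier G"
    have "\<phi> v \<otimes> x \<in> \<phi> ` V"
      using onto \<phi> x by blast
    then obtain w where w: "w \<in> V" "\<phi> w = \<phi> v \<otimes> x"
      by (metis imageE)
    then obtain ws where ws: "semiwalk E v ws w"
      using wc v by (auto simp: weakly_connected_def)
    have "net_voltage G (potential_voltage G \<phi>) ws = inv (\<phi> v) \<otimes> (\<phi> v \<otimes> x)"
      using net_voltage_potential_voltage[OF ws \<phi>] w by simp
    also have "\<dots> = x"
      using x \<phi> by (simp add: m_assoc[symmetric])
    finally show "x \<in> Net E G (potential_voltage G \<phi>) v"
      using ws by (auto simp: Net_def)
  qed
qed

lemma balanced_net_voltage_endpoint_determined: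
  assumes bal: "structurally_balanced V E G \<rho>" and \<rho>: "\<rho> \<in> E \<rightarrow> carrier G" and v: "v \<in> V"
    and ws: "semiwalk E v ws w" and ws': "semiwalk E v ws' w"
  shows "net_voltage G \<rho> ws = net_voltage G \<rho> ws'"
proof -
  have closed: "semiwalk E v (ws @ reverse_walk ws') v"
    using semiwalk_append[OF ws semiwalk_reverse_walk[OF ws']] .
  have "net_voltage G \<rho> ws \<otimes> inv (net_voltage G \<rho> ws') = net_voltage G \<rho> (ws @ reverse_walk ws')"
    using net_voltage_append[OF \<rho> semiwalk_arcs[OF ws] semiwalk_arcs[OF semiwalk_reverse_walk[OF ws']]]
      net_voltage_reverse_walk[OF \<rho> semiwalk_arcs[OF ws']] by simp
  also have "\<dots> = \<one>"
    using bal closed v by (auto simp: structurally_balanced_def)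
  finally show ?thesis
    using net_voltage_closed[OF \<rho> semiwalk_arcs[OF ws]] net_voltage_closed[OF \<rho> semiwalk_arcs[OF ws']]
    by (metis inv_closed inv_equality l_inv r_inv)
qed

lemma balanced_card_Net_le:
  assumes bal: "structurally_balanced V E G \<rho>" and \<rho>: "\<rho> \<in> E \<rightarrow> carrier G"
    and fin: "finite V" and EV: "E \<subseteq> V \<times> V" and v: "v \<in> V"
  shows "card (Net E G \<rho> v) \<le> card V"
proof (rule surj_card_le[OF fin])
  define h where "h w = net_voltage G \<rho> (SOME ws. semiwalk E v ws w)" for w
  show "Net E G \<rho> v \<subseteq> h ` V"
  proof
    fix g assume "g \<in> Net E G \<rho> v"
    then obtain ws w where ws: "semiwalk E v ws w" and g: "g = net_voltage G \<rho> ws"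
      by (auto simp: Net_def)
    have "semiwalk E v (SOME ws. semiwalk E v ws w) w"
      using ws by (rule someI)
    then have "g = h w"
      unfolding g h_def by (rule balanced_net_voltage_endpoint_determined[OF bal \<rho> v ws])
    moreover have "w \<in> V"
      using semiwalk_endpoint_in_vertices[OF ws EV v] .
    ultimately show "g \<in> h ` V" by blast
  qed
qed

end

theorem theorem2:
  fixes V :: "'v set" and E :: "('v \<times> 'v) set" and G :: "('g, 'b) monoid_scheme"
  assumes "simple_digraph V E"
    and "weakly_connected V E"
    and "group G"
    and "finite (carrier G)"
  shows "(\<exists>\<rho> \<in> E \<rightarrow> carrier G. structurally_balanced V E G \<rho> \<and> nondegenerate V E G \<rho>)
         \<longleftrightarrow> card V \<ge> card (carrier G)"
proof -
  interpret group G by fact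
  have fin: "finite V" and EV: "E \<subseteq> V \<times> V"
    using assms(1) by (auto simp: simple_digraph_def)
  show ?thesis
  proof
    assume "\<exists>\<rho> \<in> E \<rightarrow> carrier G. structurally_balanced V E G \<rho> \<and> nondegenerate V E G \<rho>"
    then obtain \<rho> v where \<rho>: "\<rho> \<in> E \<rightarrow> carrier G" and bal: "structurally_balanced V E G \<rho>"
      and v: "v \<in> V" and Net: "Net E G \<rho> v = carrier G"
      by (auto simp: nondegenerate_def)
    show "card V \<ge> card (carrier G)"
      using balanced_card_Net_le[OF bal \<rho> fin EV v] Net by simp
  next
    assume "card V \<ge> card (carrier G)"
    then obtain \<phi> where \<phi>: "\<phi> ` UNIV \<subseteq> carrier G" "carrier G \<subseteq> \<phi> ` V"
      using ex_onto_map_of_card_le[OF fin assms(4)] by blast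
    then have \<phi>_closed: "\<And>x. \<phi> x \<in> carrier G" by blast
    obtain v where v: "v \<in> V" using \<phi>(2) one_closed by blast
    show "\<exists>\<rho> \<in> E \<rightarrow> carrier G. structurally_balanced V E G \<rho> \<and> nondegenerate V E G \<rho>"
    proof (intro bexI conjI)
      show "potential_voltage G \<phi> \<in> E \<rightarrow> carrier G"
        using \<phi>_closed by (rule potential_voltage_funcset)
      show "structurally_balanced V E G (potential_voltage G \<phi>)"
        using \<phi>_closed by (rule structurally_balanced_potential_voltage)
      show "nondegenerate V E G (potential_voltage G \<phi>)"
        using Net_potential_voltage[OF assms(2) v \<phi>_closed \<phi>(2)] v by (auto simp: nondegenerate_def)
    qed
  qed
qed

end
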